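(* For any $\eta>0$ and $\beta>0$, the expected regret of Skipper$(\beta,\mathrm{DEW}(\eta,\beta))$ (Skipper with threshold $\beta$ wrapping DEW run with learning rate $\eta$ and delay bound $d_{\max}=\beta$) against an oblivious adversary satisfies $$\bar{\mathcal R}_T\le |S_\beta|+\max\left\{\frac{\ln K}{\eta},\,4e\beta\ln K\right\}+\eta\left(\frac{KTe}{2}+D_\beta\right).$$
   Context: Setting: fix integers $K\ge 2$, $T\ge 1$, and write $[K]=\{1,\dots,K\}$. An oblivious adversary fixes in advance losses $\ell_t^a\in[0,1]$ for $t=1,2,\dots$, $a\in[K]$, and nonnegative integer delays $d_1,d_2,\dots$. In each round $t$ the learner picks (possibly at random) an action $A_t\in[K]$ and suffers loss $\ell_t^{A_t}$; at the end of round $t$ (after $A_t$ has been chosen) it observes the pairs $(s,\ell_s^{A_s})$ for all $s\le t$ with $s+d_s=t$. The expected regret is $\bar{\mathcal R}_T=\mathbb E\big[\sum_{t=1}^T\ell_t^{A_t}\big]-\min_{a\in[K]}\sum_{t=1}^T\ell_t^a$, the expectation being over the learner's randomization. Algorithm DEW (delayed exponential weights) with inputs $\eta>0$ and $d_{\max}$: set $\eta'=\min\{\eta,(4e\,d_{\max})^{-1}\}$ and $w_0^a=1$ for all $a$. For $t=1,2,\dots$: let $p_t^a=w_{t-1}^a/\sum_b w_{t-1}^b$; draw $A_t\sim p_t$ and play it; at the end of round $t$, for every received pair $(s,\ell_s^{A_s})$ form the estimates $\hat\ell_s^a=\ell_s^a\mathbb 1(a=A_s)/p_s^a$ for all $a$;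 update $w_t^a=w_{t-1}^a\exp\big(-\eta'\sum_{s}\hat\ell_s^a\big)$, the sum over pairs received at the end of round $t$. Skipper$(\beta,\mathcal A)$ with threshold $\beta>0$ and base algorithm $\mathcal A$: in every round $t$ it plays the action $A_t$ proposed by $\mathcal A$, and at the end of round $t$ it passes to $\mathcal A$ exactly those observed pairs $(s,\ell_s^{A_s})$ with $s+d_s=t$ and $d_s<\beta$. $S_\beta=\{t\in[T]: d_t\ge\beta\}$ and $D_\beta=\sum_{t\in[T]\setminus S_\beta}d_t$. *)

theory Defs
  imports "HOL-Probability.Probability"
begin

(* Conventions:
   actions are the natural numbers 1..K;
   l t a  = loss of action a in round t (t = 1,2,...);
   d t    = delay of round t;
   a history h is the list [A_1, ..., A_n] of actions played so far, so A_s = h ! (s - 1). *)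

definition dew_eta' :: "real \<Rightarrow> real \<Rightarrow> real" where
  "dew_eta' eta dmax = min eta (1 / (4 * exp 1 * dmax))"

text \<open>Probability vectors p_1, ..., p_n used by Skipper(beta, DEW(eta, beta)) given the
  first n actions of history h.  The base DEW has, by the end of round n, received exactly the
  pairs (s, l s (A_s)) with s + d s <= n and d s < beta; its weight of action a is
  exp(- eta' * sum of the importance-weighted estimates received so far).\<close>
primrec skipper_dew_probs ::
  "nat \<Rightarrow> real \<Rightarrow> real \<Rightarrow> (nat \<Rightarrow> nat \<Rightarrow> real) \<Rightarrow> (nat \<Rightarrow> nat) \<Rightarrow> nat \<Rightarrow> nat list
    \<Rightarrow> (nat \<Rightarrow> real) list" where
  "skipper_dew_probs K eta beta l d 0 h = []"
| "skipper_dew_probs K eta beta l d (Suc n) h =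
     (let ps = skipper_dew_probs K eta beta l d n h;
          w = (\<lambda>a. exp (- dew_eta' eta beta *
                (\<Sum>s\<in>{s\<in>{1..n}. s + d s \<le> n \<and> real (d s) < beta}.
                   (if a = h ! (s - 1) then l s a / (ps ! (s - 1)) a else 0))))
      in ps @ [\<lambda>a. w a / (\<Sum>b\<in>{1..K}. w b)])"

definition skipper_dew_action ::
  "nat \<Rightarrow> real \<Rightarrow> real \<Rightarrow> (nat \<Rightarrow> nat \<Rightarrow> real) \<Rightarrow> (nat \<Rightarrow> nat) \<Rightarrow> nat list \<Rightarrow> nat pmf" where
  "skipper_dew_action K eta beta l d h =
     embed_pmf (\<lambda>a. if a \<in> {1..K}
                     then (skipper_dew_probs K eta beta l d (Suc (length h)) h ! length h) a
                     else 0)"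

primrec skipper_dew_traj ::
  "nat \<Rightarrow> real \<Rightarrow> real \<Rightarrow> (nat \<Rightarrow> nat \<Rightarrow> real) \<Rightarrow> (nat \<Rightarrow> nat) \<Rightarrow> nat \<Rightarrow> nat list pmf" where
  "skipper_dew_traj K eta beta l d 0 = return_pmf []"
| "skipper_dew_traj K eta beta l d (Suc n) =
     bind_pmf (skipper_dew_traj K eta beta l d n)
       (\<lambda>h. map_pmf (\<lambda>a. h @ [a]) (skipper_dew_action K eta beta l d h))"

definition skipper_dew_regret ::
  "nat \<Rightarrow> real \<Rightarrow> real \<Rightarrow> (nat \<Rightarrow> nat \<Rightarrow> real) \<Rightarrow> (nat \<Rightarrow> nat) \<Rightarrow> nat \<Rightarrow> real" where
  "skipper_dew_regret K eta beta l d T =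
     measure_pmf.expectation (skipper_dew_traj K eta beta l d T)
        (\<lambda>h. \<Sum>t\<in>{1..T}. l t (h ! (t - 1)))
     - (MIN a\<in>{1..K}. \<Sum>t\<in>{1..T}. l t a)"

definition S_beta :: "real \<Rightarrow> (nat \<Rightarrow> nat) \<Rightarrow> nat \<Rightarrow> nat set" where
  "S_beta beta d T = {t\<in>{1..T}. real (d t) \<ge> beta}"

definition D_beta :: "real \<Rightarrow> (nat \<Rightarrow> nat) \<Rightarrow> nat \<Rightarrow> nat" where
  "D_beta beta d T = (\<Sum>t\<in>{1..T} - S_beta beta d T. d t)"

end

theory Submission
  imports Defs
begin

text \<open>Skipped rounds cost at most one each.  On the kept rounds, compare the distribution
  \<open>p\<^sub>t\<close> played by DEW with the distribution \<open>q\<^sub>t\<close> that exponential weights would play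
  if all kept feedback up to round \<open>t - 1\<close> had already arrived.  The classical second-order
  bound for exponential weights, applied to the unbiased importance-weighted estimates, bounds the
  regret of \<open>q\<close> by \<open>ln K / eta' + eta' K T e / 2\<close>.  Since \<open>eta' \<le> 1 / (4 e beta)\<close>, DEW is
  stable: fewer than \<open>beta\<close> rounds of feedback move its weights by at most a factor \<open>e\<close>.  Hence
  the outstanding feedback tilts \<open>q\<^sub>t\<close> only slightly away from \<open>p\<^sub>t\<close> (\<open>q\<^sub>t \<le> 4/3 p\<^sub>t\<close>),
  and \<open>\<langle>p\<^sub>t - q\<^sub>t, \<ell>\<^sub>t\<rangle>\<close> is at most \<open>eta'\<close> times the \<open>p\<^sub>t\<close>-weighted outstanding
  estimates.  Each of these has expectation at most one, because the action of an outstanding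
  round cannot yet have influenced the learner, and a kept round \<open>s\<close> is outstanding in \<open>d\<^sub>s\<close>
  rounds; this gives \<open>eta' D\<^sub>\<beta>\<close>.\<close>

lemma exp_neg_le_quadratic:
  fixes y :: real assumes "y \<ge> 0" shows "exp (- y) \<le> 1 - y + y\<^sup>2 / 2"
proof -
  let ?f = "\<lambda>y::real. 1 - y + y\<^sup>2 / 2 - exp (- y)"
  have deriv: "(?f has_real_derivative (-1 + y + exp (- y))) (at y)" for y
    by (auto intro!: derivative_eq_intros simp: power2_eq_square)
  have "?f 0 \<le> ?f y"
  proof (rule DERIV_nonneg_imp_nondecreasing[OF assms])
    fix x assume "0 \<le> x" "x \<le> y"
    show "\<exists>y. (?f has_real_derivative y) (at x) \<and> 0 \<le> y"
      using deriv[of x] exp_ge_add_one_self[of "-x"] by (intro exI[of _ "-1 + x + exp (- x)"]) auto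
  qed
  then show ?thesis by simp
qed

lemma inverse_one_minus_le_exp:
  fixes x :: real assumes "0 \<le> x" "x \<le> 1/2" shows "1 / (1 - x) \<le> exp (2 * x)"
proof -
  have "1 / (1 - x) = 1 + x / (1 - x)" using assms by (simp add: field_simps)
  also have "\<dots> \<le> exp (x / (1 - x))" by (rule exp_ge_add_one_self)
  also have "x / (1 - x) \<le> 2 * x"
    using assms mult_left_mono[of "2 * x" 1 x] by (simp add: field_simps)
  finally show ?thesis by simp
qed

lemma sum_weighted_exp_neg_ge:
  fixes p x :: "'a \<Rightarrow> real"
  assumes "\<And>b. b \<in> A \<Longrightarrow> p b \<ge> 0" and "sum p A = 1"
  shows "1 - c * (\<Sum>b\<in>A. p b * x b) \<le> (\<Sum>b\<in>A. p b * exp (- c * x b))"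
proof -
  have "(\<Sum>b\<in>A. p b * (1 - c * x b)) \<le> (\<Sum>b\<in>A. p b * exp (- c * x b))"
    using assms(1) exp_ge_add_one_self[of "- c * x _"] by (intro sum_mono mult_left_mono) auto
  then show ?thesis
    using assms(2) by (simp add: right_diff_distrib sum_subtractf sum_distrib_left mult.left_commute)
qed

lemma exp_reweighted_le:
  fixes p x :: "'a \<Rightarrow> real"
  assumes p: "\<And>b. b \<in> A \<Longrightarrow> p b \<ge> 0" "sum p A = 1"
    and x: "\<And>b. b \<in> A \<Longrightarrow> x b \<ge> 0" and "c \<ge> 0" "a \<in> A"
    and small: "c * (\<Sum>b\<in>A. p b * x b) < 1"
  shows "p a * exp (- c * x a) / (\<Sum>b\<in>A. p b * exp (- c * x b))
    \<le> p a / (1 - c * (\<Sum>b\<in>A. p b * x b))"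
proof -
  have Z: "1 - c * (\<Sum>b\<in>A. p b * x b) \<le> (\<Sum>b\<in>A. p b * exp (- c * x b))"
    by (rule sum_weighted_exp_neg_ge[OF p])
  have "p a * exp (- c * x a) \<le> p a"
    using p(1)[OF \<open>a \<in> A\<close>] x[OF \<open>a \<in> A\<close>] \<open>c \<ge> 0\<close> by (intro mult_left_le) auto
  then have "p a * exp (- c * x a) / (\<Sum>b\<in>A. p b * exp (- c * x b))
      \<le> p a / (\<Sum>b\<in>A. p b * exp (- c * x b))"
    using Z small by (intro divide_right_mono) auto
  also have "\<dots> \<le> p a / (1 - c * (\<Sum>b\<in>A. p b * x b))"
    using Z small p(1)[OF \<open>a \<in> A\<close>] by (intro divide_left_mono) auto
  finally show ?thesis .
qed

lemma sum_mult_delta: "finite A \<Longrightarrow> b \<in> A \<Longrightarrow> (\<Sum>a\<in>A. f a * (if a = b then g a else 0)) = f b * (g b :: real)"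
  by (simp add: if_distrib[of "(*) _"] sum.delta' cong: if_cong)

definition exp_weights :: "real \<Rightarrow> nat \<Rightarrow> (nat \<Rightarrow> real) \<Rightarrow> nat \<Rightarrow> real" where
  "exp_weights c K L a = exp (- c * L a) / (\<Sum>b\<in>{1..K}. exp (- c * L b))"

lemma sum_exp_pos: "(K::nat) \<ge> 1 \<Longrightarrow> (\<Sum>b\<in>{1..K}. exp (f b :: real)) > 0"
  by (intro sum_pos) auto

lemma exp_weights_pos: "K \<ge> 1 \<Longrightarrow> exp_weights c K L a > 0"
  unfolding exp_weights_def using sum_exp_pos by simp

lemma sum_exp_weights: "K \<ge> 1 \<Longrightarrow> (\<Sum>a\<in>{1..K}. exp_weights c K L a) = 1"
  unfolding exp_weights_def using sum_exp_pos[of K "\<lambda>b. - c * L b"]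
  by (simp add: sum_divide_distrib[symmetric])

lemma exp_weights_add:
  assumes "K \<ge> 1"
  shows "exp_weights c K (\<lambda>b. L b + x b) a
    = exp_weights c K L a * exp (- c * x a) / (\<Sum>b\<in>{1..K}. exp_weights c K L b * exp (- c * x b))"
proof -
  define S where "S = (\<Sum>b\<in>{1..K}. exp (- c * L b))"
  have S: "S > 0" unfolding S_def using sum_exp_pos[OF assms] .
  have e: "exp (- c * (L b + x b)) = S * (exp_weights c K L b * exp (- c * x b))" for b
    using S unfolding exp_weights_def S_def[symmetric] by (simp add: distrib_left exp_add[symmetric])
  show ?thesis
    using S unfolding exp_weights_def[of c K "\<lambda>b. L b + x b"] e by (simp add: sum_distrib_left[symmetric])
qed

lemma ln_sum_exp_add_le:
  fixes L y :: "nat \<Rightarrow> real"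
  assumes "c \<ge> 0" "K \<ge> 1" and y_nonneg: "\<And>a. a \<in> {1..K} \<Longrightarrow> y a \<ge> 0"
  shows "ln (\<Sum>a\<in>{1..K}. exp (- c * (L a + y a)))
    \<le> ln (\<Sum>a\<in>{1..K}. exp (- c * L a)) - c * (\<Sum>a\<in>{1..K}. exp_weights c K L a * y a)
      + c\<^sup>2 / 2 * (\<Sum>a\<in>{1..K}. exp_weights c K L a * (y a)\<^sup>2)"
proof -
  define W where "W = (\<Sum>a\<in>{1..K}. exp (- c * L a))"
  let ?q = "exp_weights c K L"
  have "W > 0" unfolding W_def using sum_exp_pos[OF \<open>K \<ge> 1\<close>] .
  have q: "?q a = exp (- c * L a) / W" for a unfolding exp_weights_def W_def ..
  have "(\<Sum>a\<in>{1..K}. exp (- c * (L a + y a))) = W * (\<Sum>a\<in>{1..K}. ?q a * exp (- c * y a))"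
    using \<open>W > 0\<close> unfolding q by (simp add: sum_distrib_left distrib_left exp_add[symmetric])
  also have "\<dots> \<le> W * (\<Sum>a\<in>{1..K}. ?q a * (1 - c * y a + (c * y a)\<^sup>2 / 2))"
    using \<open>W > 0\<close> y_nonneg \<open>c \<ge> 0\<close> exp_neg_le_quadratic[of "c * y _"]
    unfolding q by (intro mult_left_mono sum_mono) auto
  also have "(\<Sum>a\<in>{1..K}. ?q a * (1 - c * y a + (c * y a)\<^sup>2 / 2))
      = 1 - c * (\<Sum>a\<in>{1..K}. ?q a * y a) + c\<^sup>2 / 2 * (\<Sum>a\<in>{1..K}. ?q a * (y a)\<^sup>2)"
    using sum_exp_weights[OF \<open>K \<ge> 1\<close>, of c L]
    by (simp add: sum.distrib sum_subtractf sum_distrib_left algebra_simps power_mult_distrib)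
  finally have le: "(\<Sum>a\<in>{1..K}. exp (- c * (L a + y a))) \<le> W * (1 - c * (\<Sum>a\<in>{1..K}. ?q a * y a)
      + c\<^sup>2 / 2 * (\<Sum>a\<in>{1..K}. ?q a * (y a)\<^sup>2))" (is "?W' \<le> W * ?r") .
  have "?W' > 0" using sum_exp_pos[OF \<open>K \<ge> 1\<close>] .
  with le \<open>W > 0\<close> have "?r > 0" by (smt (verit) mult_nonneg_nonpos)
  have "ln ?W' \<le> ln (W * ?r)" using le \<open>?W' > 0\<close> by simp
  also have "\<dots> = ln W + ln ?r" using \<open>W > 0\<close> \<open>?r > 0\<close> by (simp add: ln_mult)
  also have "ln ?r \<le> ?r - 1" using \<open>?r > 0\<close> by (rule ln_le_minus_one)
  finally show ?thesis unfolding W_def by simp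
qed

lemma exp_weights_regret:
  fixes x :: "nat \<Rightarrow> nat \<Rightarrow> real" and c :: real and K T :: nat
  assumes "c > 0" "K \<ge> 1" and x_nonneg: "\<And>t a. 1 \<le> t \<Longrightarrow> a \<in> {1..K} \<Longrightarrow> x t a \<ge> 0"
    and "a0 \<in> {1..K}"
  defines "L \<equiv> \<lambda>n a. \<Sum>t\<in>{1..n}. x t a"
  shows "(\<Sum>t\<in>{1..T}. \<Sum>a\<in>{1..K}. exp_weights c K (L (t - 1)) a * x t a)
    \<le> ln (real K) / c + L T a0
       + c / 2 * (\<Sum>t\<in>{1..T}. \<Sum>a\<in>{1..K}. exp_weights c K (L (t - 1)) a * (x t a)\<^sup>2)"
proof -
  define W where "W n = (\<Sum>a\<in>{1..K}. exp (- c * L n a))" for n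
  define q where "q n = exp_weights c K (L n)" for n
  have potential: "ln (W n) \<le> ln (real K) - c * (\<Sum>t\<in>{1..n}. \<Sum>a\<in>{1..K}. q (t - 1) a * x t a)
       + c\<^sup>2 / 2 * (\<Sum>t\<in>{1..n}. \<Sum>a\<in>{1..K}. q (t - 1) a * (x t a)\<^sup>2)" for n
  proof (induction n)
    case 0 then show ?case unfolding W_def L_def by simp
  next
    case (Suc n)
    have L_Suc: "L (Suc n) = (\<lambda>a. L n a + x (Suc n) a)" unfolding L_def by simp
    have "ln (W (Suc n)) \<le> ln (W n) - c * (\<Sum>a\<in>{1..K}. q n a * x (Suc n) a)
        + c\<^sup>2 / 2 * (\<Sum>a\<in>{1..K}. q n a * (x (Suc n) a)\<^sup>2)"
      unfolding W_def q_def L_Suc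
      by (rule ln_sum_exp_add_le) (use \<open>c > 0\<close> \<open>K \<ge> 1\<close> x_nonneg in auto)
    then show ?case using Suc.IH by (simp add: distrib_left)
  qed
  have "exp (- c * L T a0) \<le> W T" unfolding W_def
    using \<open>a0 \<in> {1..K}\<close> by (intro member_le_sum) auto
  then have "- c * L T a0 \<le> ln (W T)"
    using sum_exp_pos[OF \<open>K \<ge> 1\<close>] by (simp add: W_def ln_ge_iff)
  with potential[of T] have "c * (\<Sum>t\<in>{1..T}. \<Sum>a\<in>{1..K}. q (t - 1) a * x t a) \<le>
     c * (ln (real K) / c + L T a0 + c / 2 * (\<Sum>t\<in>{1..T}. \<Sum>a\<in>{1..K}. q (t - 1) a * (x t a)\<^sup>2))"
    using \<open>c > 0\<close> by (simp add: algebra_simps power2_eq_square)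
  then show ?thesis using \<open>c > 0\<close> unfolding q_def by simp
qed

locale skipper_dew =
  fixes K :: nat and eta beta :: real and l :: "nat \<Rightarrow> nat \<Rightarrow> real" and d :: "nat \<Rightarrow> nat"
  assumes K_pos: "K \<ge> 1" and eta_pos: "eta > 0" and beta_pos: "beta > 0"
    and loss_range: "\<And>t a. a \<in> {1..K} \<Longrightarrow> 0 \<le> l t a \<and> l t a \<le> 1"
begin

definition eta' :: real where "eta' = dew_eta' eta beta"

text \<open>\<open>prob t h\<close> is the distribution \<open>p\<^sub>t\<close> of the action in round \<open>t\<close>; only the first
  \<open>t - 1\<close> entries of the history \<open>h\<close> matter.\<close>
definition prob :: "nat \<Rightarrow> nat list \<Rightarrow> nat \<Rightarrow> real" where
  "prob t h = skipper_dew_probs K eta beta l d t h ! (t - 1)"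

definition loss_est :: "nat \<Rightarrow> nat list \<Rightarrow> nat \<Rightarrow> real" where
  "loss_est s h a = (if a = h ! (s - 1) then l s a / prob s h a else 0)"

definition est_sum :: "nat set \<Rightarrow> nat list \<Rightarrow> nat \<Rightarrow> real" where
  "est_sum S h a = (\<Sum>s\<in>S. loss_est s h a)"

definition observed :: "nat \<Rightarrow> nat set" where
  "observed n = {s\<in>{1..n}. s + d s \<le> n \<and> real (d s) < beta}"

definition arriving :: "nat \<Rightarrow> nat set" where
  "arriving n = {s\<in>{1..n}. s + d s = n \<and> real (d s) < beta}"

definition outstanding :: "nat \<Rightarrow> nat set" where
  "outstanding n = {s\<in>{1..n}. real (d s) < beta \<and> n < s + d s}"

definition kept :: "nat \<Rightarrow> nat set" where
  "kept n = {s\<in>{1..n}. real (d s) < beta}"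

lemma length_skipper_dew_probs [simp]: "length (skipper_dew_probs K eta beta l d n h) = n"
  by (induction n) (auto simp: Let_def)

lemma skipper_dew_probs_prefix:
  "m \<le> n \<Longrightarrow> i < m \<Longrightarrow> skipper_dew_probs K eta beta l d n h ! i = skipper_dew_probs K eta beta l d m h ! i"
proof (induction n)
  case (Suc n)
  then show ?case by (cases "m = Suc n") (auto simp: Let_def nth_append)
qed simp

lemma prob_Suc: "prob (Suc n) h = exp_weights eta' K (est_sum (observed n) h)"
proof -
  have "skipper_dew_probs K eta beta l d n h ! (s - 1) = skipper_dew_probs K eta beta l d s h ! (s - 1)"
    if "s \<in> observed n" for s
    using that skipper_dew_probs_prefix[of s n "s - 1" h] by (auto simp: observed_def)
  then have "est_sum (observed n) h a = (\<Sum>s\<in>{s\<in>{1..n}. s + d s \<le> n \<and> real (d s) < beta}.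
      if a = h ! (s - 1) then l s a / (skipper_dew_probs K eta beta l d n h ! (s - 1)) a else 0)" for a
    unfolding est_sum_def loss_est_def prob_def observed_def by (intro sum.cong) auto
  then show ?thesis
    by (auto simp: prob_def exp_weights_def eta'_def Let_def nth_append)
qed

lemma prob_pos: "1 \<le> t \<Longrightarrow> prob t h a > 0"
  using prob_Suc[of "t - 1"] exp_weights_pos[OF K_pos] by simp

lemma sum_prob: "1 \<le> t \<Longrightarrow> (\<Sum>a\<in>{1..K}. prob t h a) = 1"
  using prob_Suc[of "t - 1"] sum_exp_weights[OF K_pos] by simp

lemma prob_nonneg: "1 \<le> t \<Longrightarrow> prob t h a \<ge> 0"
  using prob_pos less_imp_le by blast

lemma prob_cong_history:
  "(\<And>u. u \<in> {1..n} \<Longrightarrow> u + d u \<le> n \<Longrightarrow> h ! (u - 1) = h' ! (u - 1))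
   \<Longrightarrow> prob (Suc n) h = prob (Suc n) h'"
proof (induction n rule: less_induct)
  case (less n)
  have "loss_est s h a = loss_est s h' a" if s: "s \<in> observed n" for s a
  proof -
    from s have s1: "1 \<le> s" "s \<le> n" "s + d s \<le> n" unfolding observed_def by auto
    have "prob (Suc (s - 1)) h = prob (Suc (s - 1)) h'"
      using s1 by (intro less.IH less.prems) auto
    moreover have "h ! (s - 1) = h' ! (s - 1)" using s1 by (intro less.prems) auto
    ultimately show ?thesis unfolding loss_est_def using s1 by simp
  qed
  then show ?case unfolding prob_Suc est_sum_def by (auto intro!: sum.cong arg_cong[of _ _ "exp_weights _ _"])
qed

lemma prob_append: "n \<le> length h \<Longrightarrow> prob (Suc n) (h @ xs) = prob (Suc n) h"
  by (intro prob_cong_history) (auto simp: nth_append)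

lemma prob_take: "n \<le> m \<Longrightarrow> prob (Suc n) (take m h) = prob (Suc n) h"
  by (intro prob_cong_history) auto

lemma prob_update: "1 \<le> s \<Longrightarrow> n < s + d s \<Longrightarrow> prob (Suc n) (h[s - 1 := b]) = prob (Suc n) h"
proof (intro prob_cong_history)
  fix u assume "1 \<le> s" "n < s + d s" "u \<in> {1..n}" "u + d u \<le> n"
  then have "u \<noteq> s" by auto
  then have "u - 1 \<noteq> s - 1" using \<open>1 \<le> s\<close> \<open>u \<in> {1..n}\<close> by auto
  then show "h[s - 1 := b] ! (u - 1) = h ! (u - 1)" by simp
qed

lemma loss_est_nonneg: "a \<in> {1..K} \<Longrightarrow> 1 \<le> s \<Longrightarrow> loss_est s h a \<ge> 0"
  unfolding loss_est_def using loss_range[of a s] prob_pos[of s h a] by auto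

lemma est_sum_nonneg: "a \<in> {1..K} \<Longrightarrow> S \<subseteq> {1..} \<Longrightarrow> est_sum S h a \<ge> 0"
  unfolding est_sum_def by (intro sum_nonneg loss_est_nonneg) auto

lemma sum_mult_loss_est:
  "1 \<le> s \<Longrightarrow> (\<Sum>b\<in>{1..K}. Q b * loss_est s h b)
    = (if h ! (s - 1) \<in> {1..K} then Q (h ! (s - 1)) * l s (h ! (s - 1)) / prob s h (h ! (s - 1)) else 0)"
  unfolding loss_est_def by (simp add: if_distrib[of "(*) _"] sum.delta' cong: if_cong)

lemma loss_est_take: "1 \<le> s \<Longrightarrow> s \<le> m \<Longrightarrow> loss_est s (take m h) a = loss_est s h a"
  unfolding loss_est_def using prob_take[of "s - 1" m h] by simp

lemma loss_est_append: "1 \<le> s \<Longrightarrow> s \<le> length h \<Longrightarrow> loss_est s (h @ xs) a = loss_est s h a"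
proof -
  assume "1 \<le> s" "s \<le> length h"
  then have "s - 1 < length h" by simp
  then have "(h @ xs) ! (s - 1) = h ! (s - 1)" by (simp add: nth_append)
  moreover have "prob s (h @ xs) = prob s h" using prob_append[of "s - 1" h xs] \<open>1 \<le> s\<close> \<open>s \<le> length h\<close> by simp
  ultimately show ?thesis unfolding loss_est_def by simp
qed

lemma loss_est_last:
  "length h = n \<Longrightarrow> loss_est (Suc n) (h @ [b]) a = (if a = b then l (Suc n) a / prob (Suc n) h a else 0)"
proof -
  assume "length h = n"
  then have "(h @ [b]) ! n = b" by (simp add: nth_append)
  then show ?thesis unfolding loss_est_def using prob_append[of n h "[b]"] \<open>length h = n\<close> by simp
qed

lemma est_sum_take: "S \<subseteq> {1..m} \<Longrightarrow> est_sum S (take m h) = est_sum S h"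
  unfolding est_sum_def by (intro ext sum.cong refl loss_est_take) auto

lemma est_sum_append: "S \<subseteq> {1..length h} \<Longrightarrow> est_sum S (h @ xs) = est_sum S h"
  unfolding est_sum_def by (intro ext sum.cong refl loss_est_append) auto

lemma est_sum_union:
  "finite A \<Longrightarrow> finite B \<Longrightarrow> A \<inter> B = {} \<Longrightarrow> est_sum (A \<union> B) h a = est_sum A h a + est_sum B h a"
  unfolding est_sum_def by (rule sum.union_disjoint)

definition histories :: "nat \<Rightarrow> nat list set" where
  "histories n = {h. length h = n \<and> set h \<subseteq> {1..K}}"

definition expect :: "nat \<Rightarrow> (nat list \<Rightarrow> real) \<Rightarrow> real" where
  "expect n g = (\<Sum>h\<in>histories n. pmf (skipper_dew_traj K eta beta l d n) h * g h)"

lemma finite_histories [simp]: "finite (histories n)"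
proof -
  have "histories n = {xs. set xs \<subseteq> {1..K} \<and> length xs = n}" unfolding histories_def by auto
  then show ?thesis using finite_lists_length_eq[of "{1..K}" n] by simp
qed

lemma pmf_skipper_dew_action:
  "pmf (skipper_dew_action K eta beta l d h) a = (if a \<in> {1..K} then prob (Suc (length h)) h a else 0)"
proof -
  let ?f = "\<lambda>a. if a \<in> {1..K} then prob (Suc (length h)) h a else 0"
  have nonneg: "\<And>a. 0 \<le> ?f a" by (simp add: prob_nonneg)
  have "(\<integral>\<^sup>+x. ennreal (?f x) \<partial>count_space UNIV) = (\<Sum>a\<in>{1..K}. ennreal (?f a))"
    by (rule nn_integral_count_space') auto
  also have "\<dots> = ennreal (\<Sum>a\<in>{1..K}. ?f a)"
    by (intro sum_ennreal) (auto simp: prob_nonneg)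
  also have "(\<Sum>a\<in>{1..K}. ?f a) = 1" using sum_prob by simp
  finally have "(\<integral>\<^sup>+x. ennreal (?f x) \<partial>count_space UNIV) = 1" by simp
  moreover have "skipper_dew_action K eta beta l d h = embed_pmf ?f"
    by (simp only: skipper_dew_action_def prob_def diff_Suc_1)
  ultimately show ?thesis using pmf_embed_pmf[of ?f] nonneg by simp
qed

lemma set_pmf_skipper_dew_action: "set_pmf (skipper_dew_action K eta beta l d h) \<subseteq> {1..K}"
  using pmf_skipper_dew_action[of h] by (auto simp: set_pmf_eq split: if_splits)

lemma set_pmf_skipper_dew_traj: "set_pmf (skipper_dew_traj K eta beta l d n) \<subseteq> histories n"
  by (induction n) (use set_pmf_skipper_dew_action in \<open>auto simp: histories_def subset_iff\<close>)

lemma expectation_skipper_dew_traj: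
  "measure_pmf.expectation (skipper_dew_traj K eta beta l d n) g = expect n g"
  unfolding expect_def using set_pmf_skipper_dew_traj[of n]
  by (subst integral_measure_pmf[of "histories n"]) auto

lemma expect_Suc: "expect (Suc n) g = expect n (\<lambda>h. \<Sum>a\<in>{1..K}. prob (Suc n) h a * g (h @ [a]))"
proof -
  let ?act = "skipper_dew_action K eta beta l d"
  have action: "measure_pmf.expectation (map_pmf (\<lambda>a. h @ [a]) (?act h)) g
      = (\<Sum>a\<in>{1..K}. prob (Suc n) h a * g (h @ [a]))" if "h \<in> histories n" for h
  proof -
    have "measure_pmf.expectation (map_pmf (\<lambda>a. h @ [a]) (?act h)) g
        = measure_pmf.expectation (?act h) (\<lambda>a. g (h @ [a]))" by simp
    also have "\<dots> = (\<Sum>a\<in>{1..K}. pmf (?act h) a *\<^sub>R g (h @ [a]))"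
      using set_pmf_skipper_dew_action[of h] by (intro integral_measure_pmf) auto
    finally show ?thesis using that by (simp add: pmf_skipper_dew_action histories_def)
  qed
  have "expect (Suc n) g = (\<Sum>h\<in>histories n. pmf (skipper_dew_traj K eta beta l d n) h *\<^sub>R
      measure_pmf.expectation (map_pmf (\<lambda>a. h @ [a]) (?act h)) g)"
    unfolding expectation_skipper_dew_traj[symmetric] skipper_dew_traj.simps
  proof (rule pmf_expectation_bind)
    show "finite (set_pmf (map_pmf (\<lambda>a. h @ [a]) (?act h)))" for h
      using set_pmf_skipper_dew_action[of h] finite_subset by auto
  qed (use set_pmf_skipper_dew_traj in auto)
  then show ?thesis unfolding expect_def using action by (simp cong: sum.cong)
qed

lemma expect_0: "expect 0 g = g []"
proof -
  have "histories 0 = {[]}" unfolding histories_def by auto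
  then show ?thesis unfolding expect_def by simp
qed

lemma expect_cong: "(\<And>h. h \<in> histories n \<Longrightarrow> f h = g h) \<Longrightarrow> expect n f = expect n g"
  unfolding expect_def by (auto intro!: sum.cong)

lemma expect_mono: "(\<And>h. h \<in> histories n \<Longrightarrow> f h \<le> g h) \<Longrightarrow> expect n f \<le> expect n g"
  unfolding expect_def by (auto intro!: sum_mono mult_left_mono)

lemma expect_add: "expect n (\<lambda>h. f h + g h) = expect n f + expect n g"
  unfolding expect_def by (simp add: distrib_left sum.distrib)

lemma expect_diff: "expect n (\<lambda>h. f h - g h) = expect n f - expect n g"
  unfolding expect_def by (simp add: right_diff_distrib sum_subtractf)

lemma expect_cmult: "expect n (\<lambda>h. c * f h) = c * expect n f"
  unfolding expect_def by (simp add: sum_distrib_left mult.left_commute)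

lemma expect_sum: "expect n (\<lambda>h. \<Sum>i\<in>I. f i h) = (\<Sum>i\<in>I. expect n (f i))"
  unfolding expect_def by (simp add: sum_distrib_left sum.swap[of _ "histories n"])

lemma expect_const: "expect n (\<lambda>h. c) = c"
proof (induction n)
  case (Suc n)
  have "expect (Suc n) (\<lambda>h. c) = expect n (\<lambda>h. (\<Sum>a\<in>{1..K}. prob (Suc n) h a) * c)"
    by (simp add: expect_Suc sum_distrib_right)
  then show ?case using Suc.IH sum_prob[of "Suc n"] by simp
qed (simp add: expect_0)

lemma expect_nonneg: "(\<And>h. h \<in> histories n \<Longrightarrow> f h \<ge> 0) \<Longrightarrow> expect n f \<ge> 0"
  using expect_mono[of n "\<lambda>_. 0" f] by (simp add: expect_const)

lemma expect_take: "m \<le> n \<Longrightarrow> expect n (\<lambda>h. g (take m h)) = expect m g"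
proof (induction n)
  case 0 then show ?case by (simp add: expect_0)
next
  case (Suc n)
  show ?case
  proof (cases "m = Suc n")
    case True
    show ?thesis unfolding True by (intro expect_cong) (auto simp: histories_def)
  next
    case False
    then have "m \<le> n" using Suc by simp
    have "expect (Suc n) (\<lambda>h. g (take m h))
        = expect n (\<lambda>h. (\<Sum>a\<in>{1..K}. prob (Suc n) h a) * g (take m h))"
      unfolding expect_Suc using \<open>m \<le> n\<close>
      by (intro expect_cong) (auto simp: histories_def simp flip: sum_distrib_right)
    also have "\<dots> = expect m g" using Suc.IH[OF \<open>m \<le> n\<close>] sum_prob[of "Suc n"] by simp
    finally show ?thesis .
  qed
qed

lemma expect_round:
  assumes "Suc n \<le> T" "\<And>h. f (take (Suc n) h) = f h"
  shows "expect T f = expect n (\<lambda>h. \<Sum>b\<in>{1..K}. prob (Suc n) h b * f (h @ [b]))"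
  using expect_take[OF assms(1), of f] assms(2) by (simp add: expect_Suc)

lemma expect_importance_weight_current:
  assumes b: "b \<in> {1..K}" and inv: "\<And>h. \<psi> (h[n := b]) = \<psi> h"
  shows "expect (Suc n) (\<lambda>h. \<psi> h * (if h ! n = b then c / prob (Suc n) h b else 0))
    = c * expect (Suc n) \<psi>"
proof -
  have weighted: "(\<Sum>a\<in>{1..K}. prob (Suc n) h a * (\<psi> (h @ [a]) *
      (if (h @ [a]) ! n = b then c / prob (Suc n) (h @ [a]) b else 0))) = c * \<psi> (h @ [b])"
    if "h \<in> histories n" for h
  proof -
    have len: "length h = n" using that by (simp add: histories_def)
    then have "(\<Sum>a\<in>{1..K}. prob (Suc n) h a * (\<psi> (h @ [a]) *
        (if (h @ [a]) ! n = b then c / prob (Suc n) (h @ [a]) b else 0)))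
      = (\<Sum>a\<in>{1..K}. if a = b then c * \<psi> (h @ [b]) else 0)"
      using prob_pos[of "Suc n" h b] by (intro sum.cong) (auto simp: prob_append nth_append)
    then show ?thesis using b by simp
  qed
  have invariant: "(\<Sum>a\<in>{1..K}. prob (Suc n) h a * \<psi> (h @ [a])) = \<psi> (h @ [b])"
    if "h \<in> histories n" for h
  proof -
    have "(h @ [a])[n := b] = h @ [b]" for a using that by (simp add: histories_def list_update_append)
    then have "\<psi> (h @ [a]) = \<psi> (h @ [b])" for a using inv[of "h @ [a]"] by simp
    then have "(\<Sum>a\<in>{1..K}. prob (Suc n) h a * \<psi> (h @ [a])) = (\<Sum>a\<in>{1..K}. prob (Suc n) h a) * \<psi> (h @ [b])"
      by (auto simp: sum_distrib_right intro!: sum.cong)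
    then show ?thesis using sum_prob[of "Suc n" h] by simp
  qed
  have "expect (Suc n) (\<lambda>h. \<psi> h * (if h ! n = b then c / prob (Suc n) h b else 0))
      = expect n (\<lambda>h. c * \<psi> (h @ [b]))"
    unfolding expect_Suc by (intro expect_cong weighted)
  also have "\<dots> = c * expect (Suc n) \<psi>"
    unfolding expect_cmult expect_Suc using invariant by (simp cong: expect_cong)
  finally show ?thesis .
qed

text \<open>The importance weight of round \<open>s\<close> has conditional mean \<open>c\<close> as long as the feedback of
  round \<open>s\<close> has not reached the learner, because then nothing else depends on the action of
  round \<open>s\<close>.\<close>
lemma expect_importance_weight:
  assumes "1 \<le> s" "s \<le> n" "n < s + d s" "b \<in> {1..K}" and inv: "\<And>h. \<psi> (h[s - 1 := b]) = \<psi> h"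
  shows "expect n (\<lambda>h. \<psi> h * (if h ! (s - 1) = b then c / prob s h b else 0)) = c * expect n \<psi>"
  using assms(2,3) inv
proof (induction n arbitrary: \<psi>)
  case 0 then show ?case using \<open>1 \<le> s\<close> by simp
next
  case (Suc n)
  let ?w = "\<lambda>h. if h ! (s - 1) = b then c / prob s h b else 0"
  show ?case
  proof (cases "s = Suc n")
    case True
    show ?thesis unfolding True
      using expect_importance_weight_current[OF \<open>b \<in> {1..K}\<close>, of \<psi> n c] Suc.prems(3)[unfolded True] by simp
  next
    case False
    then have "s \<le> n" using Suc.prems by simp
    let ?\<psi>' = "\<lambda>h. \<Sum>a\<in>{1..K}. prob (Suc n) h a * \<psi> (h @ [a])"
    have w_append: "?w (h @ [a]) = ?w h" if "h \<in> histories n" for h a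
    proof -
      have "s - 1 < length h" using that \<open>s \<le> n\<close> \<open>1 \<le> s\<close> by (simp add: histories_def)
      moreover have "prob s (h @ [a]) = prob s h"
        using prob_append[of "s - 1" h "[a]"] \<open>1 \<le> s\<close> calculation by simp
      ultimately show ?thesis by (simp add: nth_append)
    qed
    have \<psi>'_inv: "?\<psi>' (h[s - 1 := b]) = ?\<psi>' h" for h
    proof (cases "s - 1 < length h")
      case True
      have "prob (Suc n) (h[s - 1 := b]) = prob (Suc n) h"
        using prob_update \<open>1 \<le> s\<close> Suc.prems(2) by simp
      moreover have "\<psi> (h[s - 1 := b] @ [a]) = \<psi> (h @ [a])" for a
        using Suc.prems(3)[of "h @ [a]"] True by (simp add: list_update_append)
      ultimately show ?thesis by simp
    qed (simp add: list_update_beyond)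
    have "expect (Suc n) (\<lambda>h. \<psi> h * ?w h) = expect n (\<lambda>h. ?\<psi>' h * ?w h)"
      unfolding expect_Suc using w_append
      by (intro expect_cong) (simp add: sum_distrib_right mult.assoc)
    also have "\<dots> = c * expect n ?\<psi>'"
      using Suc.IH[OF \<open>s \<le> n\<close>] Suc.prems(2) \<psi>'_inv by simp
    finally show ?thesis unfolding expect_Suc .
  qed
qed

lemma expect_played_loss:
  "Suc n \<le> T \<Longrightarrow> expect T (\<lambda>h. l (Suc n) (h ! n))
    = expect n (\<lambda>h. \<Sum>a\<in>{1..K}. prob (Suc n) h a * l (Suc n) a)"
  by (subst expect_round[of n T]) (auto intro!: expect_cong simp: histories_def nth_append)

lemma expect_loss_est:
  assumes "Suc n \<le> T" "a \<in> {1..K}"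
  shows "expect T (\<lambda>h. loss_est (Suc n) h a) = l (Suc n) a"
proof (subst expect_round[OF assms(1)])
  show "loss_est (Suc n) (take (Suc n) h) a = loss_est (Suc n) h a" for h
    by (simp add: loss_est_take)
  have "(\<Sum>b\<in>{1..K}. prob (Suc n) h b * loss_est (Suc n) (h @ [b]) a) = l (Suc n) a"
    if "h \<in> histories n" for h
  proof -
    have "(\<Sum>b\<in>{1..K}. prob (Suc n) h b * loss_est (Suc n) (h @ [b]) a)
      = (\<Sum>b\<in>{1..K}. prob (Suc n) h b * (if b = a then l (Suc n) a / prob (Suc n) h a else 0))"
      using that by (intro sum.cong) (auto simp: histories_def loss_est_last)
    then show ?thesis using assms(2) prob_pos[of "Suc n" h a] by (simp add: sum_mult_delta)
  qed
  then show "expect n (\<lambda>h. \<Sum>b\<in>{1..K}. prob (Suc n) h b * loss_est (Suc n) (h @ [b]) a) = l (Suc n) a"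
    by (simp add: expect_const cong: expect_cong)
qed

lemma eta'_pos: "eta' > 0"
  unfolding eta'_def dew_eta'_def using eta_pos beta_pos by simp

lemma eta'_le_eta: "eta' \<le> eta"
  unfolding eta'_def dew_eta'_def by simp

lemma eta'_beta_le: "eta' * exp 1 * beta \<le> 1/4"
proof -
  have "eta' * (exp 1 * beta) \<le> 1 / (4 * exp 1 * beta) * (exp 1 * beta)"
    using beta_pos by (intro mult_right_mono) (auto simp: eta'_def dew_eta'_def)
  then show ?thesis using beta_pos by (simp add: field_simps)
qed

lemma ln_K_div_eta'_le: "ln (real K) / eta' \<le> max (ln (real K) / eta) (4 * exp 1 * beta * ln (real K))"
  by (cases "eta \<le> 1 / (4 * exp 1 * beta)") (simp_all add: eta'_def dew_eta'_def mult.commute)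

definition max_kept_delay :: nat where "max_kept_delay = nat \<lceil>beta\<rceil> - 1"

lemma less_beta_iff: "real k < beta \<longleftrightarrow> k \<le> max_kept_delay"
proof -
  have "real k < beta \<longleftrightarrow> int k < \<lceil>beta\<rceil>" by (simp add: less_ceiling_iff)
  moreover have "\<lceil>beta\<rceil> \<ge> 1" using beta_pos by (simp add: one_le_ceiling)
  ultimately show ?thesis unfolding max_kept_delay_def by linarith
qed

definition arrivals :: "nat \<Rightarrow> nat \<Rightarrow> nat" where
  "arrivals m n = card {u. 1 \<le> u \<and> m < u + d u \<and> u + d u \<le> n \<and> real (d u) < beta}"

lemma arrivals_self [simp]: "arrivals n n = 0"
proof -
  have empty: "{u. 1 \<le> u \<and> n < u + d u \<and> u + d u \<le> n \<and> real (d u) < beta} = {}" by auto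
  show ?thesis unfolding arrivals_def empty by simp
qed

lemma arrivals_Suc: "m \<le> n \<Longrightarrow> arrivals m (Suc n) = arrivals m n + card (arriving (Suc n))"
proof -
  assume "m \<le> n"
  let ?A = "{u. 1 \<le> u \<and> m < u + d u \<and> u + d u \<le> n \<and> real (d u) < beta}"
  have split: "{u. 1 \<le> u \<and> m < u + d u \<and> u + d u \<le> Suc n \<and> real (d u) < beta} = ?A \<union> arriving (Suc n)"
    using \<open>m \<le> n\<close> unfolding arriving_def by auto
  have "finite ?A" by (rule finite_subset[of _ "{1..n}"]) auto
  then show ?thesis unfolding arrivals_def split
    by (subst card_Un_disjoint) (auto simp: arriving_def)
qed

lemma arrivals_small: "m \<le> n \<Longrightarrow> real (n - m) < beta \<Longrightarrow> eta' * exp 1 * arrivals m n \<le> 1/2"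
proof -
  assume "m \<le> n" "real (n - m) < beta"
  have "{u. 1 \<le> u \<and> m < u + d u \<and> u + d u \<le> n \<and> real (d u) < beta} \<subseteq> {m + 1 - max_kept_delay..n}"
  proof
    fix u assume "u \<in> {u. 1 \<le> u \<and> m < u + d u \<and> u + d u \<le> n \<and> real (d u) < beta}"
    then have "m < u + d u" "u + d u \<le> n" "d u \<le> max_kept_delay" using less_beta_iff by auto
    then show "u \<in> {m + 1 - max_kept_delay..n}" by auto
  qed
  then have "arrivals m n \<le> card {m + 1 - max_kept_delay..n}"
    unfolding arrivals_def by (intro card_mono) auto
  also have "\<dots> \<le> 2 * max_kept_delay"
    using \<open>m \<le> n\<close> \<open>real (n - m) < beta\<close> less_beta_iff[of "n - m"] by simp
  finally have "real (arrivals m n) \<le> 2 * beta"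
    using less_beta_iff[of max_kept_delay] by linarith
  then have "eta' * exp 1 * arrivals m n \<le> eta' * exp 1 * (2 * beta)"
    using eta'_pos by (intro mult_left_mono) auto
  then show ?thesis using eta'_beta_le by simp
qed

lemma prob_step:
  "prob (Suc (Suc n)) h a = prob (Suc n) h a * exp (- eta' * est_sum (arriving (Suc n)) h a)
    / (\<Sum>b\<in>{1..K}. prob (Suc n) h b * exp (- eta' * est_sum (arriving (Suc n)) h b))"
proof -
  have "observed (Suc n) = observed n \<union> arriving (Suc n)" "observed n \<inter> arriving (Suc n) = {}"
    "finite (observed n)" "finite (arriving (Suc n))"
    unfolding observed_def arriving_def by auto
  then have "est_sum (observed (Suc n)) h
      = (\<lambda>b. est_sum (observed n) h b + est_sum (arriving (Suc n)) h b)"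
    by (simp add: est_sum_union fun_eq_iff)
  then show ?thesis unfolding prob_Suc by (simp only: exp_weights_add[OF K_pos])
qed

text \<open>Each estimate is importance weighted, so round \<open>s\<close> contributes at most
  \<open>Q A\<^sub>s / p\<^sub>s A\<^sub>s \<le> e\<close>.\<close>
lemma weighted_est_sum_le:
  assumes "finite S" "S \<subseteq> {1..}" and Q_nonneg: "\<And>b. b \<in> {1..K} \<Longrightarrow> Q b \<ge> 0"
    and Q_le: "\<And>s b. s \<in> S \<Longrightarrow> b \<in> {1..K} \<Longrightarrow> Q b \<le> exp 1 * prob s h b"
  shows "(\<Sum>b\<in>{1..K}. Q b * est_sum S h b) \<le> exp 1 * card S"
proof -
  have "(\<Sum>b\<in>{1..K}. Q b * est_sum S h b) = (\<Sum>s\<in>S. \<Sum>b\<in>{1..K}. Q b * loss_est s h b)"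
    unfolding est_sum_def sum_distrib_left by (rule sum.swap)
  also have "\<dots> \<le> (\<Sum>s\<in>S. exp 1)"
  proof (rule sum_mono)
    fix s assume "s \<in> S"
    then have "1 \<le> s" using assms(2) by auto
    show "(\<Sum>b\<in>{1..K}. Q b * loss_est s h b) \<le> exp 1"
    proof (cases "h ! (s - 1) \<in> {1..K}")
      case True
      let ?b = "h ! (s - 1)"
      have "Q ?b * l s ?b / prob s h ?b \<le> Q ?b / prob s h ?b"
        using loss_range[OF True, of s] Q_nonneg[OF True] prob_pos[OF \<open>1 \<le> s\<close>, of h ?b]
        by (simp add: divide_right_mono mult_left_le)
      also have "\<dots> \<le> exp 1"
        using Q_le[OF \<open>s \<in> S\<close> True] prob_pos[OF \<open>1 \<le> s\<close>, of h ?b] by (simp add: divide_le_eq)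
      finally show ?thesis using True sum_mult_loss_est[OF \<open>1 \<le> s\<close>, of Q h] by simp
    qed (use sum_mult_loss_est[OF \<open>1 \<le> s\<close>, of Q h] in auto)
  qed
  finally show ?thesis by (simp add: mult.commute)
qed

lemma prob_step_le:
  assumes earlier: "\<And>s b. s \<in> arriving (Suc n) \<Longrightarrow> b \<in> {1..K} \<Longrightarrow> prob (Suc n) h b \<le> exp 1 * prob s h b"
    and few: "eta' * exp 1 * card (arriving (Suc n)) \<le> 1/2" and "a \<in> {1..K}"
  shows "prob (Suc (Suc n)) h a \<le> exp (2 * eta' * exp 1 * card (arriving (Suc n))) * prob (Suc n) h a"
proof -
  let ?p = "prob (Suc n) h" and ?x = "est_sum (arriving (Suc n)) h"
  define y where "y = eta' * exp 1 * card (arriving (Suc n))"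
  have "(\<Sum>b\<in>{1..K}. ?p b * ?x b) \<le> exp 1 * card (arriving (Suc n))"
    by (rule weighted_est_sum_le) (use earlier prob_nonneg in \<open>auto simp: arriving_def\<close>)
  then have small: "eta' * (\<Sum>b\<in>{1..K}. ?p b * ?x b) \<le> y"
    unfolding y_def using eta'_pos by (simp add: mult.assoc mult_left_mono)
  have "0 \<le> y" "y \<le> 1/2" unfolding y_def using eta'_pos few by auto
  have "prob (Suc (Suc n)) h a \<le> ?p a / (1 - eta' * (\<Sum>b\<in>{1..K}. ?p b * ?x b))"
    unfolding prob_step using \<open>a \<in> {1..K}\<close> small \<open>y \<le> 1/2\<close> eta'_pos sum_prob[of "Suc n" h]
    by (intro exp_reweighted_le) (auto simp: prob_nonneg arriving_def intro!: est_sum_nonneg)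
  also have "\<dots> \<le> ?p a / (1 - y)"
    using small \<open>y \<le> 1/2\<close> prob_nonneg[of "Suc n" h a] by (intro divide_left_mono) auto
  also have "\<dots> \<le> ?p a * exp (2 * y)"
    using mult_left_mono[OF inverse_one_minus_le_exp[OF \<open>0 \<le> y\<close> \<open>y \<le> 1/2\<close>] prob_nonneg[of "Suc n" h a]]
    by simp
  finally show ?thesis unfolding y_def by (simp add: mult_ac)
qed

text \<open>The feedback arriving at the end of round \<open>n + 1\<close> was sampled fewer
  than \<open>beta\<close> rounds earlier, so the induction hypothesis bounds its importance weight.\<close>
lemma prob_stable:
  "m \<le> n \<Longrightarrow> real (n - m) < beta \<Longrightarrow> a \<in> {1..K} \<Longrightarrow>
    prob (Suc n) h a \<le> exp (2 * eta' * exp 1 * arrivals m n) * prob (Suc m) h a"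
proof (induction n arbitrary: m a)
  case (Suc n)
  show ?case
  proof (cases "m = Suc n")
    case False
    then have "m \<le> n" "real (n - m) < beta" using Suc.prems by auto
    have earlier: "prob (Suc n) h b \<le> exp 1 * prob s h b" if "s \<in> arriving (Suc n)" "b \<in> {1..K}" for s b
    proof -
      have s: "1 \<le> s" "s - 1 \<le> n" "n - (s - 1) = d s" "real (d s) < beta"
        using that unfolding arriving_def by auto
      then have "prob (Suc n) h b \<le> exp (2 * eta' * exp 1 * arrivals (s - 1) n) * prob (Suc (s - 1)) h b"
        using Suc.IH[of "s - 1" b] that(2) by simp
      also have "\<dots> \<le> exp 1 * prob (Suc (s - 1)) h b"
        using arrivals_small[of "s - 1" n] s prob_nonneg[of "Suc (s - 1)" h b]
        by (intro mult_right_mono) (auto simp del: of_nat_diff)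
      finally show ?thesis using s(1) by simp
    qed
    have "eta' * exp 1 * card (arriving (Suc n)) \<le> eta' * exp 1 * arrivals m (Suc n)"
      unfolding arrivals_Suc[OF \<open>m \<le> n\<close>] using eta'_pos by simp
    also have "\<dots> \<le> 1/2" using arrivals_small Suc.prems by simp
    finally have "prob (Suc (Suc n)) h a
        \<le> exp (2 * eta' * exp 1 * card (arriving (Suc n))) * prob (Suc n) h a"
      using prob_step_le[OF earlier _ Suc.prems(3)] by simp
    also have "\<dots> \<le> exp (2 * eta' * exp 1 * card (arriving (Suc n)))
        * (exp (2 * eta' * exp 1 * arrivals m n) * prob (Suc m) h a)"
      using Suc.IH[OF \<open>m \<le> n\<close> \<open>real (n - m) < beta\<close> Suc.prems(3)] by (intro mult_left_mono) auto
    also have "\<dots> = exp (2 * eta' * exp 1 * arrivals m (Suc n)) * prob (Suc m) h a"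
      unfolding arrivals_Suc[OF \<open>m \<le> n\<close>] by (simp add: exp_add[symmetric] algebra_simps)
    finally show ?thesis .
  qed simp
qed simp

lemma prob_le_exp1_prob:
  "m \<le> n \<Longrightarrow> real (n - m) < beta \<Longrightarrow> a \<in> {1..K} \<Longrightarrow> prob (Suc n) h a \<le> exp 1 * prob (Suc m) h a"
proof -
  assume "m \<le> n" "real (n - m) < beta" "a \<in> {1..K}"
  then have "prob (Suc n) h a \<le> exp (2 * eta' * exp 1 * arrivals m n) * prob (Suc m) h a"
    by (rule prob_stable)
  also have "\<dots> \<le> exp 1 * prob (Suc m) h a"
    using arrivals_small[OF \<open>m \<le> n\<close> \<open>real (n - m) < beta\<close>] prob_nonneg[of "Suc m" h a]
    by (intro mult_right_mono) auto
  finally show ?thesis .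
qed

definition undelayed :: "nat \<Rightarrow> nat list \<Rightarrow> nat \<Rightarrow> real" where
  "undelayed n h = exp_weights eta' K (est_sum (kept n) h)"

lemma undelayed_eq:
  "undelayed n h a = prob (Suc n) h a * exp (- eta' * est_sum (outstanding n) h a)
    / (\<Sum>b\<in>{1..K}. prob (Suc n) h b * exp (- eta' * est_sum (outstanding n) h b))"
proof -
  have "kept n = observed n \<union> outstanding n" "observed n \<inter> outstanding n = {}"
    "finite (observed n)" "finite (outstanding n)"
    unfolding kept_def observed_def outstanding_def by auto
  then have "est_sum (kept n) h = (\<lambda>b. est_sum (observed n) h b + est_sum (outstanding n) h b)"
    by (simp add: est_sum_union fun_eq_iff)
  then show ?thesis unfolding undelayed_def prob_Suc by (simp only: exp_weights_add[OF K_pos])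
qed

lemma est_sum_outstanding_nonneg: "a \<in> {1..K} \<Longrightarrow> est_sum (outstanding n) h a \<ge> 0"
  by (intro est_sum_nonneg) (auto simp: outstanding_def)

lemma undelayed_nonneg: "undelayed n h a \<ge> 0"
  unfolding undelayed_def using exp_weights_pos[OF K_pos] less_imp_le by blast

lemma card_outstanding_less: "real (card (outstanding n)) < beta"
proof -
  have "outstanding n \<subseteq> {n + 1 - max_kept_delay..n}"
  proof
    fix u assume "u \<in> outstanding n"
    then have "u \<le> n" "n < u + d u" "d u \<le> max_kept_delay"
      unfolding outstanding_def using less_beta_iff by auto
    then show "u \<in> {n + 1 - max_kept_delay..n}" by auto
  qed
  then have "card (outstanding n) \<le> card {n + 1 - max_kept_delay..n}"
    by (intro card_mono) auto
  then have "card (outstanding n) \<le> max_kept_delay" by simp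
  then show ?thesis using less_beta_iff by simp
qed

lemma weighted_outstanding_le:
  "eta' * (\<Sum>b\<in>{1..K}. prob (Suc n) h b * est_sum (outstanding n) h b) \<le> 1/4"
proof -
  have "prob (Suc n) h b \<le> exp 1 * prob s h b" if "s \<in> outstanding n" "b \<in> {1..K}" for s b
  proof -
    have "1 \<le> s" "s - 1 \<le> n" "real (n - (s - 1)) < beta"
      using that unfolding outstanding_def by auto
    then show ?thesis using prob_le_exp1_prob[of "s - 1" n b h] that(2) by simp
  qed
  then have "(\<Sum>b\<in>{1..K}. prob (Suc n) h b * est_sum (outstanding n) h b) \<le> exp 1 * card (outstanding n)"
    by (intro weighted_est_sum_le) (auto simp: outstanding_def prob_nonneg)
  also have "\<dots> \<le> exp 1 * beta" using card_outstanding_less[of n] by simp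
  finally have "eta' * (\<Sum>b\<in>{1..K}. prob (Suc n) h b * est_sum (outstanding n) h b) \<le> eta' * (exp 1 * beta)"
    using eta'_pos by (intro mult_left_mono) auto
  then show ?thesis using eta'_beta_le by (simp add: mult.assoc)
qed

lemma undelayed_le: "a \<in> {1..K} \<Longrightarrow> undelayed n h a \<le> 4/3 * prob (Suc n) h a"
proof -
  assume "a \<in> {1..K}"
  let ?E = "\<Sum>b\<in>{1..K}. prob (Suc n) h b * est_sum (outstanding n) h b"
  have "undelayed n h a \<le> prob (Suc n) h a / (1 - eta' * ?E)"
    unfolding undelayed_eq using \<open>a \<in> {1..K}\<close> weighted_outstanding_le[of n h] eta'_pos sum_prob[of "Suc n" h]
    by (intro exp_reweighted_le) (auto simp: prob_nonneg est_sum_outstanding_nonneg)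
  also have "\<dots> \<le> prob (Suc n) h a / (3/4)"
    using weighted_outstanding_le[of n h] prob_nonneg[of "Suc n" h a] by (intro divide_left_mono) auto
  finally show ?thesis by simp
qed

lemma played_minus_undelayed_le:
  "(\<Sum>a\<in>{1..K}. prob (Suc n) h a * l (Suc n) a) - (\<Sum>a\<in>{1..K}. undelayed n h a * l (Suc n) a)
    \<le> eta' * (\<Sum>a\<in>{1..K}. prob (Suc n) h a * est_sum (outstanding n) h a)"
proof -
  define Z where "Z = (\<Sum>b\<in>{1..K}. prob (Suc n) h b * exp (- eta' * est_sum (outstanding n) h b))"
  have "1 - eta' * (\<Sum>b\<in>{1..K}. prob (Suc n) h b * est_sum (outstanding n) h b) \<le> Z"
    unfolding Z_def using sum_prob[of "Suc n" h] by (intro sum_weighted_exp_neg_ge) (auto simp: prob_nonneg)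
  then have "Z > 0" using weighted_outstanding_le[of n h] by simp
  have "Z \<le> (\<Sum>b\<in>{1..K}. prob (Suc n) h b)"
    unfolding Z_def using eta'_pos prob_nonneg[of "Suc n" h]
    by (intro sum_mono mult_left_le) (auto simp: est_sum_outstanding_nonneg)
  then have "Z \<le> 1" using sum_prob[of "Suc n" h] by simp
  have "prob (Suc n) h a * l (Suc n) a - undelayed n h a * l (Suc n) a
      \<le> eta' * (prob (Suc n) h a * est_sum (outstanding n) h a)" if "a \<in> {1..K}" for a
  proof -
    let ?p = "prob (Suc n) h a" and ?m = "est_sum (outstanding n) h a" and ?l = "l (Suc n) a"
    have pl: "0 \<le> ?p * ?l" "?l \<le> 1" using loss_range[OF that] prob_nonneg[of "Suc n" h a] by auto
    have "?p * ?l * exp (- eta' * ?m) \<le> ?p * ?l * (exp (- eta' * ?m) / Z)"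
      using pl \<open>Z > 0\<close> \<open>Z \<le> 1\<close> by (intro mult_left_mono) (simp_all add: le_divide_eq)
    then have "?p * ?l - undelayed n h a * ?l \<le> ?p * ?l * (1 - exp (- eta' * ?m))"
      unfolding undelayed_eq Z_def[symmetric] by (simp add: algebra_simps)
    also have "\<dots> \<le> ?p * ?l * (eta' * ?m)"
      using pl exp_ge_add_one_self[of "- eta' * ?m"] by (intro mult_left_mono) auto
    also have "\<dots> \<le> ?p * (eta' * ?m)"
      using pl prob_nonneg[of "Suc n" h a] est_sum_outstanding_nonneg[OF that, of n h] eta'_pos
      by (intro mult_right_mono mult_left_le) auto
    finally show ?thesis by (simp add: algebra_simps)
  qed
  then have "(\<Sum>a\<in>{1..K}. prob (Suc n) h a * l (Suc n) a - undelayed n h a * l (Suc n) a)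
      \<le> (\<Sum>a\<in>{1..K}. eta' * (prob (Suc n) h a * est_sum (outstanding n) h a))"
    by (intro sum_mono) auto
  then show ?thesis by (simp add: sum_subtractf sum_distrib_left)
qed

lemma undelayed_take: "n \<le> m \<Longrightarrow> undelayed n (take m h) = undelayed n h"
  unfolding undelayed_def by (subst est_sum_take) (auto simp: kept_def)

lemma undelayed_append: "n \<le> length h \<Longrightarrow> undelayed n (h @ xs) = undelayed n h"
  unfolding undelayed_def by (subst est_sum_append) (auto simp: kept_def)

lemma expect_undelayed_loss_est:
  assumes "Suc n \<le> T"
  shows "expect T (\<lambda>h. \<Sum>a\<in>{1..K}. undelayed n h a * loss_est (Suc n) h a)
    = expect n (\<lambda>h. \<Sum>a\<in>{1..K}. undelayed n h a * l (Suc n) a)"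
proof (subst expect_round[OF assms])
  show "(\<Sum>a\<in>{1..K}. undelayed n (take (Suc n) h) a * loss_est (Suc n) (take (Suc n) h) a)
      = (\<Sum>a\<in>{1..K}. undelayed n h a * loss_est (Suc n) h a)" for h
    by (simp add: undelayed_take loss_est_take)
  have "prob (Suc n) h b * (\<Sum>a\<in>{1..K}. undelayed n (h @ [b]) a * loss_est (Suc n) (h @ [b]) a)
      = undelayed n h b * l (Suc n) b" if "h \<in> histories n" "b \<in> {1..K}" for h b
    using that prob_pos[of "Suc n" h b]
    by (simp add: histories_def undelayed_append loss_est_last sum_mult_delta)
  then show "expect n (\<lambda>h. \<Sum>b\<in>{1..K}. prob (Suc n) h b *
      (\<Sum>a\<in>{1..K}. undelayed n (h @ [b]) a * loss_est (Suc n) (h @ [b]) a))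
    = expect n (\<lambda>h. \<Sum>a\<in>{1..K}. undelayed n h a * l (Suc n) a)"
    by (intro expect_cong sum.cong) auto
qed

lemma expect_undelayed_loss_est_sq:
  assumes "Suc n \<le> T"
  shows "expect T (\<lambda>h. \<Sum>a\<in>{1..K}. undelayed n h a * (loss_est (Suc n) h a)\<^sup>2)
    = expect n (\<lambda>h. \<Sum>a\<in>{1..K}. undelayed n h a * (l (Suc n) a)\<^sup>2 / prob (Suc n) h a)"
proof (subst expect_round[OF assms])
  show "(\<Sum>a\<in>{1..K}. undelayed n (take (Suc n) h) a * (loss_est (Suc n) (take (Suc n) h) a)\<^sup>2)
      = (\<Sum>a\<in>{1..K}. undelayed n h a * (loss_est (Suc n) h a)\<^sup>2)" for h
    by (simp add: undelayed_take loss_est_take)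
  have "prob (Suc n) h b * (\<Sum>a\<in>{1..K}. undelayed n (h @ [b]) a * (loss_est (Suc n) (h @ [b]) a)\<^sup>2)
      = undelayed n h b * (l (Suc n) b)\<^sup>2 / prob (Suc n) h b" if "h \<in> histories n" "b \<in> {1..K}" for h b
  proof -
    have "(\<Sum>a\<in>{1..K}. undelayed n (h @ [b]) a * (loss_est (Suc n) (h @ [b]) a)\<^sup>2)
       = (\<Sum>a\<in>{1..K}. undelayed n h a * (if a = b then (l (Suc n) a / prob (Suc n) h a)\<^sup>2 else 0))"
      using that by (intro sum.cong) (auto simp: histories_def undelayed_append loss_est_last)
    then show ?thesis using that prob_pos[of "Suc n" h b] by (simp add: sum_mult_delta power2_eq_square)
  qed
  then show "expect n (\<lambda>h. \<Sum>b\<in>{1..K}. prob (Suc n) h b *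
      (\<Sum>a\<in>{1..K}. undelayed n (h @ [b]) a * (loss_est (Suc n) (h @ [b]) a)\<^sup>2))
    = expect n (\<lambda>h. \<Sum>a\<in>{1..K}. undelayed n h a * (l (Suc n) a)\<^sup>2 / prob (Suc n) h a)"
    by (intro expect_cong sum.cong) auto
qed

lemma expect_played_loss_est_le:
  assumes "s \<in> outstanding n"
  shows "expect n (\<lambda>h. \<Sum>a\<in>{1..K}. prob (Suc n) h a * loss_est s h a) \<le> 1"
proof -
  have s: "1 \<le> s" "s \<le> n" "n < s + d s" using assms unfolding outstanding_def by auto
  have "expect n (\<lambda>h. prob (Suc n) h a * loss_est s h a) \<le> expect n (\<lambda>h. prob (Suc n) h a)"
    if a: "a \<in> {1..K}" for a
  proof -
    have "expect n (\<lambda>h. prob (Suc n) h a * loss_est s h a)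
      = expect n (\<lambda>h. prob (Suc n) h a * (if h ! (s - 1) = a then l s a / prob s h a else 0))"
      unfolding loss_est_def by (intro expect_cong) auto
    also have "\<dots> = l s a * expect n (\<lambda>h. prob (Suc n) h a)"
      using s a prob_update[OF s(1) s(3)] by (intro expect_importance_weight) auto
    also have "\<dots> \<le> expect n (\<lambda>h. prob (Suc n) h a)"
      using loss_range[OF a, of s] expect_nonneg[of n "\<lambda>h. prob (Suc n) h a"] prob_nonneg
      by (intro mult_left_le_one_le) auto
    finally show ?thesis .
  qed
  then have "expect n (\<lambda>h. \<Sum>a\<in>{1..K}. prob (Suc n) h a * loss_est s h a)
      \<le> expect n (\<lambda>h. \<Sum>a\<in>{1..K}. prob (Suc n) h a)"
    unfolding expect_sum by (intro sum_mono) auto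
  also have "\<dots> = 1" using sum_prob[of "Suc n"] by (simp add: expect_const)
  finally show ?thesis .
qed

lemma expect_played_minus_undelayed_le:
  "expect n (\<lambda>h. \<Sum>a\<in>{1..K}. prob (Suc n) h a * l (Suc n) a)
    - expect n (\<lambda>h. \<Sum>a\<in>{1..K}. undelayed n h a * l (Suc n) a) \<le> eta' * card (outstanding n)"
proof -
  have "expect n (\<lambda>h. \<Sum>a\<in>{1..K}. prob (Suc n) h a * l (Suc n) a)
      - expect n (\<lambda>h. \<Sum>a\<in>{1..K}. undelayed n h a * l (Suc n) a)
    \<le> expect n (\<lambda>h. eta' * (\<Sum>s\<in>outstanding n. \<Sum>a\<in>{1..K}. prob (Suc n) h a * loss_est s h a))"
  proof (unfold expect_diff[symmetric], intro expect_mono)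
    fix h
    have "(\<Sum>a\<in>{1..K}. prob (Suc n) h a * est_sum (outstanding n) h a)
        = (\<Sum>s\<in>outstanding n. \<Sum>a\<in>{1..K}. prob (Suc n) h a * loss_est s h a)"
      unfolding est_sum_def sum_distrib_left by (rule sum.swap)
    then show "(\<Sum>a\<in>{1..K}. prob (Suc n) h a * l (Suc n) a) - (\<Sum>a\<in>{1..K}. undelayed n h a * l (Suc n) a)
      \<le> eta' * (\<Sum>s\<in>outstanding n. \<Sum>a\<in>{1..K}. prob (Suc n) h a * loss_est s h a)"
      using played_minus_undelayed_le[of n h] by simp
  qed
  also have "\<dots> \<le> eta' * (\<Sum>s\<in>outstanding n. 1)"
    unfolding expect_cmult expect_sum[where I = "outstanding n"] using eta'_pos expect_played_loss_est_le
    by (intro mult_left_mono sum_mono) auto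
  finally show ?thesis by simp
qed

lemma undelayed_variance_le:
  "(\<Sum>a\<in>{1..K}. undelayed n h a * (l (Suc n) a)\<^sup>2 / prob (Suc n) h a) \<le> exp 1 * K"
proof -
  have "undelayed n h a * (l (Suc n) a)\<^sup>2 / prob (Suc n) h a \<le> exp 1" if a: "a \<in> {1..K}" for a
  proof -
    have "undelayed n h a * (l (Suc n) a)\<^sup>2 \<le> undelayed n h a"
      using loss_range[OF a] undelayed_nonneg by (simp add: mult_left_le power_le_one)
    also have "\<dots> \<le> 4/3 * prob (Suc n) h a" by (rule undelayed_le[OF a])
    also have "\<dots> \<le> exp 1 * prob (Suc n) h a"
      using prob_nonneg exp_ge_add_one_self[of 1] by (intro mult_right_mono) auto
    finally show ?thesis using prob_pos[of "Suc n" h a] by (simp add: divide_le_eq)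
  qed
  then have "(\<Sum>a\<in>{1..K}. undelayed n h a * (l (Suc n) a)\<^sup>2 / prob (Suc n) h a) \<le> (\<Sum>a\<in>{1..K}. exp 1)"
    by (intro sum_mono)
  then show ?thesis by (simp add: mult.commute)
qed

text \<open>Each kept round \<open>s\<close> is outstanding in exactly the rounds \<open>s, \<dots>, s + d s - 1\<close>.\<close>
lemma sum_card_outstanding_le: "(\<Sum>n<T. card (outstanding n)) \<le> D_beta beta d T"
proof -
  have "card (outstanding n) = (\<Sum>s\<in>kept T. if s \<le> n \<and> n < s + d s then 1 else 0)" if "n < T" for n
  proof -
    have "outstanding n = {s\<in>kept T. s \<le> n \<and> n < s + d s}"
      unfolding outstanding_def kept_def using that by auto
    then show ?thesis by (simp add: sum.If_cases kept_def Int_def conj_commute)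
  qed
  then have "(\<Sum>n<T. card (outstanding n)) = (\<Sum>s\<in>kept T. \<Sum>n<T. if s \<le> n \<and> n < s + d s then 1 else 0)"
    by (simp add: sum.swap[of _ "kept T"])
  also have "\<dots> \<le> (\<Sum>s\<in>kept T. d s)"
  proof (rule sum_mono)
    fix s
    have "(\<Sum>n<T. if s \<le> n \<and> n < s + d s then 1 else 0) = card {n\<in>{..<T}. s \<le> n \<and> n < s + d s}"
      by (simp add: sum.If_cases Int_def)
    also have "\<dots> \<le> card {s..<s + d s}" by (rule card_mono) auto
    finally show "(\<Sum>n<T. if s \<le> n \<and> n < s + d s then 1 else (0::nat)) \<le> d s" by simp
  qed
  also have "(\<Sum>s\<in>kept T. d s) = D_beta beta d T"
    unfolding D_beta_def S_beta_def kept_def by (intro sum.cong) auto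
  finally show ?thesis .
qed

text \<open>Skipped rounds enter exponential weights with zero loss.\<close>
lemma undelayed_regret_le:
  assumes "a0 \<in> {1..K}"
  shows "(\<Sum>t\<in>kept T. \<Sum>a\<in>{1..K}. undelayed (t - 1) h a * loss_est t h a)
    \<le> ln (real K) / eta' + est_sum (kept T) h a0
       + eta' / 2 * (\<Sum>t\<in>kept T. \<Sum>a\<in>{1..K}. undelayed (t - 1) h a * (loss_est t h a)\<^sup>2)"
proof -
  define x where "x t a = (if real (d t) < beta then loss_est t h a else 0)" for t a
  have cumulative: "(\<lambda>a. \<Sum>s\<in>{1..n}. x s a) = est_sum (kept n) h" for n
    unfolding x_def est_sum_def kept_def by (intro ext sum.inter_filter[symmetric]) simp
  have restrict: "(\<Sum>t\<in>{1..T}. \<Sum>a\<in>{1..K}. undelayed (t - 1) h a * F (x t a))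
      = (\<Sum>t\<in>kept T. \<Sum>a\<in>{1..K}. undelayed (t - 1) h a * F (loss_est t h a))"
    if "F 0 = 0" for F :: "real \<Rightarrow> real"
  proof -
    have "(\<Sum>t\<in>{1..T}. \<Sum>a\<in>{1..K}. undelayed (t - 1) h a * F (x t a))
      = (\<Sum>t\<in>{1..T}. if real (d t) < beta then \<Sum>a\<in>{1..K}. undelayed (t - 1) h a * F (loss_est t h a) else 0)"
      using that by (intro sum.cong) (auto simp: x_def)
    also have "\<dots> = (\<Sum>t\<in>kept T. \<Sum>a\<in>{1..K}. undelayed (t - 1) h a * F (loss_est t h a))"
      unfolding kept_def by (rule sum.inter_filter[symmetric]) simp
    finally show ?thesis .
  qed
  have "(\<Sum>t\<in>{1..T}. \<Sum>a\<in>{1..K}. exp_weights eta' K (\<lambda>a. \<Sum>s\<in>{1..t - 1}. x s a) a * x t a)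
    \<le> ln (real K) / eta' + (\<Sum>s\<in>{1..T}. x s a0)
       + eta' / 2 * (\<Sum>t\<in>{1..T}. \<Sum>a\<in>{1..K}.
            exp_weights eta' K (\<lambda>a. \<Sum>s\<in>{1..t - 1}. x s a) a * (x t a)\<^sup>2)"
    by (rule exp_weights_regret) (use eta'_pos K_pos assms loss_est_nonneg in \<open>auto simp: x_def\<close>)
  then have "(\<Sum>t\<in>{1..T}. \<Sum>a\<in>{1..K}. undelayed (t - 1) h a * x t a)
    \<le> ln (real K) / eta' + est_sum (kept T) h a0
       + eta' / 2 * (\<Sum>t\<in>{1..T}. \<Sum>a\<in>{1..K}. undelayed (t - 1) h a * (x t a)\<^sup>2)"
    unfolding cumulative cumulative[THEN fun_cong] undelayed_def[symmetric] .
  then show ?thesis using restrict[of "\<lambda>y. y"] restrict[of "\<lambda>y. y\<^sup>2"] by simp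
qed

definition expected_loss :: "nat \<Rightarrow> real" where
  "expected_loss n = expect n (\<lambda>h. \<Sum>a\<in>{1..K}. prob (Suc n) h a * l (Suc n) a)"

definition expected_undelayed_loss :: "nat \<Rightarrow> real" where
  "expected_undelayed_loss n = expect n (\<lambda>h. \<Sum>a\<in>{1..K}. undelayed n h a * l (Suc n) a)"

lemma skipper_dew_regret_eq:
  "skipper_dew_regret K eta beta l d T
    = (\<Sum>t\<in>{1..T}. expected_loss (t - 1)) - (MIN a\<in>{1..K}. \<Sum>t\<in>{1..T}. l t a)"
proof -
  have "expect T (\<lambda>h. l t (h ! (t - 1))) = expected_loss (t - 1)" if "t \<in> {1..T}" for t
    using that expect_played_loss[of "t - 1" T] by (simp add: expected_loss_def)
  then show ?thesis
    unfolding skipper_dew_regret_def expectation_skipper_dew_traj expect_sum by simp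
qed

lemma expected_loss_le_one: "expected_loss n \<le> 1"
proof -
  have "expected_loss n \<le> expect n (\<lambda>h. \<Sum>a\<in>{1..K}. prob (Suc n) h a)"
    unfolding expected_loss_def using loss_range prob_nonneg
    by (intro expect_mono sum_mono mult_left_le) auto
  then show ?thesis using sum_prob[of "Suc n"] by (simp add: expect_const)
qed

lemma sum_card_outstanding_kept_le: "(\<Sum>t\<in>kept T. real (card (outstanding (t - 1)))) \<le> D_beta beta d T"
proof -
  have "(\<Sum>t\<in>kept T. real (card (outstanding (t - 1))))
      \<le> (\<Sum>t\<in>{1..T}. real (card (outstanding (t - 1))))"
    by (intro sum_mono2) (auto simp: kept_def)
  also have "\<dots> = (\<Sum>n<T. real (card (outstanding n)))"
    by (induction T) simp_all
  also have "\<dots> \<le> D_beta beta d T"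
    using sum_card_outstanding_le by (simp flip: of_nat_sum)
  finally show ?thesis .
qed

lemma sum_expected_loss_kept_le:
  "(\<Sum>t\<in>kept T. expected_loss (t - 1))
    \<le> (\<Sum>t\<in>kept T. expected_undelayed_loss (t - 1)) + eta' * D_beta beta d T"
proof -
  have "(\<Sum>t\<in>kept T. expected_loss (t - 1))
      \<le> (\<Sum>t\<in>kept T. expected_undelayed_loss (t - 1) + eta' * card (outstanding (t - 1)))"
  proof (rule sum_mono)
    fix t assume "t \<in> kept T"
    then have "Suc (t - 1) = t" by (simp add: kept_def)
    then show "expected_loss (t - 1) \<le> expected_undelayed_loss (t - 1) + eta' * card (outstanding (t - 1))"
      using expect_played_minus_undelayed_le[of "t - 1"]
      unfolding expected_loss_def expected_undelayed_loss_def by simp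
  qed
  also have "\<dots> = (\<Sum>t\<in>kept T. expected_undelayed_loss (t - 1))
      + eta' * (\<Sum>t\<in>kept T. real (card (outstanding (t - 1))))"
    by (simp add: sum.distrib sum_distrib_left)
  also have "\<dots> \<le> (\<Sum>t\<in>kept T. expected_undelayed_loss (t - 1)) + eta' * D_beta beta d T"
    using sum_card_outstanding_kept_le eta'_pos by simp
  finally show ?thesis .
qed

lemma expect_undelayed_second_moment_le:
  "expect T (\<lambda>h. \<Sum>t\<in>kept T. \<Sum>a\<in>{1..K}. undelayed (t - 1) h a * (loss_est t h a)\<^sup>2)
    \<le> real K * real T * exp 1"
proof -
  have "expect T (\<lambda>h. \<Sum>t\<in>kept T. \<Sum>a\<in>{1..K}. undelayed (t - 1) h a * (loss_est t h a)\<^sup>2)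
      \<le> (\<Sum>t\<in>kept T. exp 1 * K)"
    unfolding expect_sum[where I = "kept T"]
  proof (rule sum_mono)
    fix t assume "t \<in> kept T"
    then have t: "Suc (t - 1) = t" "Suc (t - 1) \<le> T" by (auto simp: kept_def)
    then have "expect T (\<lambda>h. \<Sum>a\<in>{1..K}. undelayed (t - 1) h a * (loss_est t h a)\<^sup>2)
        = expect (t - 1) (\<lambda>h. \<Sum>a\<in>{1..K}. undelayed (t - 1) h a * (l t a)\<^sup>2 / prob t h a)"
      using expect_undelayed_loss_est_sq[of "t - 1" T] by simp
    also have "\<dots> \<le> expect (t - 1) (\<lambda>h. exp 1 * K)"
      using undelayed_variance_le[of "t - 1"] t by (intro expect_mono) simp
    finally show "expect T (\<lambda>h. \<Sum>a\<in>{1..K}. undelayed (t - 1) h a * (loss_est t h a)\<^sup>2) \<le> exp 1 * K"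
      by (simp add: expect_const)
  qed
  also have "\<dots> \<le> (\<Sum>t\<in>{1..T}. exp 1 * K)"
    by (intro sum_mono2) (auto simp: kept_def)
  finally show ?thesis by (simp add: mult_ac)
qed

lemma sum_expected_undelayed_loss_le:
  assumes "a0 \<in> {1..K}"
  shows "(\<Sum>t\<in>kept T. expected_undelayed_loss (t - 1))
    \<le> ln (real K) / eta' + (\<Sum>t\<in>kept T. l t a0) + eta' * (real K * real T * exp 1 / 2)"
proof -
  define F1 where "F1 h = (\<Sum>t\<in>kept T. \<Sum>a\<in>{1..K}. undelayed (t - 1) h a * loss_est t h a)" for h
  define F2 where "F2 h = (\<Sum>t\<in>kept T. \<Sum>a\<in>{1..K}. undelayed (t - 1) h a * (loss_est t h a)\<^sup>2)" for h
  have round: "Suc (t - 1) = t" "Suc (t - 1) \<le> T" if "t \<in> kept T" for t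
    using that by (auto simp: kept_def)
  have "expect T F1 = (\<Sum>t\<in>kept T. expected_undelayed_loss (t - 1))"
    unfolding F1_def expect_sum[where I = "kept T"]
  proof (rule sum.cong[OF refl])
    fix t assume "t \<in> kept T"
    then show "expect T (\<lambda>h. \<Sum>a\<in>{1..K}. undelayed (t - 1) h a * loss_est t h a)
        = expected_undelayed_loss (t - 1)"
      using expect_undelayed_loss_est[of "t - 1" T] round[of t] unfolding expected_undelayed_loss_def by simp
  qed
  moreover have "expect T (\<lambda>h. est_sum (kept T) h a0) = (\<Sum>t\<in>kept T. l t a0)"
    unfolding est_sum_def expect_sum[where I = "kept T"]
  proof (rule sum.cong[OF refl])
    fix t assume "t \<in> kept T"
    then show "expect T (\<lambda>h. loss_est t h a0) = l t a0"
      using expect_loss_est[of "t - 1" T a0] round[of t] assms by simp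
  qed
  moreover have "expect T F1 \<le> ln (real K) / eta' + expect T (\<lambda>h. est_sum (kept T) h a0) + eta' / 2 * expect T F2"
    using expect_mono[OF undelayed_regret_le[OF assms]]
    unfolding F1_def F2_def expect_add expect_const expect_cmult .
  moreover have "eta' / 2 * expect T F2 \<le> eta' / 2 * (real K * real T * exp 1)"
    using expect_undelayed_second_moment_le eta'_pos unfolding F2_def by (intro mult_left_mono) auto
  ultimately show ?thesis by simp
qed

lemma regret_le_eta':
  "skipper_dew_regret K eta beta l d T \<le> real (card (S_beta beta d T)) + ln (real K) / eta'
    + eta' * (real K * real T * exp 1 / 2 + real (D_beta beta d T))"
proof -
  have "finite ((\<lambda>a. \<Sum>t\<in>{1..T}. l t a) ` {1..K})" "(\<lambda>a. \<Sum>t\<in>{1..T}. l t a) ` {1..K} \<noteq> {}"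
    using K_pos by auto
  from Min_in[OF this] obtain a0 where a0: "a0 \<in> {1..K}"
    and min: "(MIN a\<in>{1..K}. \<Sum>t\<in>{1..T}. l t a) = (\<Sum>t\<in>{1..T}. l t a0)"
    by auto
  have "{1..T} = S_beta beta d T \<union> kept T" "S_beta beta d T \<inter> kept T = {}"
    "finite (S_beta beta d T)" "finite (kept T)"
    unfolding S_beta_def kept_def by auto
  then have regret: "skipper_dew_regret K eta beta l d T
      = (\<Sum>t\<in>S_beta beta d T. expected_loss (t - 1) - l t a0) + (\<Sum>t\<in>kept T. expected_loss (t - 1) - l t a0)"
    unfolding skipper_dew_regret_eq min sum_subtractf[symmetric] by (simp only: sum.union_disjoint)
  have "(\<Sum>t\<in>S_beta beta d T. expected_loss (t - 1) - l t a0) \<le> (\<Sum>t\<in>S_beta beta d T. 1)"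
  proof (rule sum_mono)
    fix t show "expected_loss (t - 1) - l t a0 \<le> 1"
      using expected_loss_le_one[of "t - 1"] loss_range[OF a0, of t] by linarith
  qed
  moreover have "(\<Sum>t\<in>kept T. expected_loss (t - 1) - l t a0)
      \<le> ln (real K) / eta' + eta' * (real K * real T * exp 1 / 2 + real (D_beta beta d T))"
    using sum_expected_loss_kept_le[of T] sum_expected_undelayed_loss_le[OF a0, of T]
    unfolding sum_subtractf distrib_left by linarith
  ultimately show ?thesis unfolding regret by simp
qed

end

theorem theorem3:
  fixes K T :: nat and eta beta :: real
    and l :: "nat \<Rightarrow> nat \<Rightarrow> real" and d :: "nat \<Rightarrow> nat"
  assumes "K \<ge> 2" and "T \<ge> 1" and "eta > 0" and "beta > 0"
    and "\<And>t a. a \<in> {1..K} \<Longrightarrow> 0 \<le> l t a \<and> l t a \<le> 1"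
  shows "skipper_dew_regret K eta beta l d T
         \<le> real (card (S_beta beta d T))
           + max (ln (real K) / eta) (4 * exp 1 * beta * ln (real K))
           + eta * (real K * real T * exp 1 / 2 + real (D_beta beta d T))"
proof -
  interpret skipper_dew K eta beta l d
    using assms by unfold_locales auto
  have "eta' * (real K * real T * exp 1 / 2 + real (D_beta beta d T))
      \<le> eta * (real K * real T * exp 1 / 2 + real (D_beta beta d T))"
    using eta'_le_eta by (intro mult_right_mono) auto
  then show ?thesis using regret_le_eta'[of T] ln_K_div_eta'_le by linarith
qed

end
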